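(* Assume $k=2$ and write $l=l_1$, $y=y_1$. (1) If $r=e-1$, then $b=(l+1)e+h\le(l+2)e-2$, and $b=(l+2)e-2$ if and only if $h=e-2$. (2) If $r=e-2$, then $b=(l+1)(e-1)+h-p-1$ and $c=(p+l+2)(e-1)-b$. Further: (a) $l+1\le p\le2l+2$, and $p=2l+2$ implies $h>0$; (b) $(l+1)(e-3)\le b\le(l+1)(e-2)+e-3$; moreover $b=(l+1)(e-3)$ if and only if ($p=2l+2$ and $h=1$) or ($p=2l+1$ and $h=0$); and $b=(l+1)(e-2)+e-3$ implies $p=l+1$, $p>1$, $h=e-2$, $y=e+1$.
   Context: Let $(R,\mathfrak m)$ be a one-dimensional local Noetherian domain with quotient field $K$, not regular, analytically irreducible (the integral closure $\overline R$ of $R$ in $K$ is a DVR and a finite $R$-module) and residually rational. Let $v$ be the valuation of $\overline R$ normalized so a uniformizer $t$ has value 1, $v(R)=\{v(a):a\in R\setminus\{0\}\}$, $\mathfrak C=(R:_K\overline R)=t^c\overline R$ with $c$ the least element of $v(R)$ with $c+\mathbb N\subseteq v(R)$, $\delta=\ell_R(\overline R/R)$, $r=\ell_R((R:_K\mathfrak m)/R)$, $b=(c-\delta)r-\delta$, $e$ the least positive element of $v(R)$. Let $x\in\mathfrak m$ with $v(x)=e$ and $k=\ell_R(R/(\mathfrak C+xR))$. Let $p$ be the integer with $c-e\le pe<c$ and $h=(p+1)e-c$. When $k=2$, $y_1$ is the unique $y\in v(R)$ with $0<y<c$ and $y-e\notin v(R)$, and $l_1\ge0$ is the integer with $y_1+l_1e<c\le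 y_1+(l_1+1)e$; then $v(R)=\{0,e,\dots,pe\}\cup\{m\ge c\}\cup\{y_1,y_1+e,\dots,y_1+l_1e\}$. *)

theory Defs
  imports "HOL-Computational_Algebra.Polynomial"
begin

text \<open>The quotient field K is modelled as a type of class field; R, its
  integral closure, ideals and fractional ideals are subsets of K.\<close>

definition is_subring :: "'a::field set \<Rightarrow> bool" where
  "is_subring R \<longleftrightarrow> 0 \<in> R \<and> 1 \<in> R \<and> (\<forall>a\<in>R. \<forall>b\<in>R. a + b \<in> R \<and> a * b \<in> R) \<and> (\<forall>a\<in>R. - a \<in> R)"

definition quotient_field_is_univ :: "'a::field set \<Rightarrow> bool" where
  "quotient_field_is_univ R \<longleftrightarrow> (\<forall>z. \<exists>a\<in>R. \<exists>b\<in>R. b \<noteq> 0 \<and> z = a / b)"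

definition rsubmod :: "'a::field set \<Rightarrow> 'a set \<Rightarrow> bool" where
  "rsubmod R M \<longleftrightarrow> 0 \<in> M \<and> (\<forall>a\<in>M. \<forall>b\<in>M. a + b \<in> M) \<and> (\<forall>s\<in>R. \<forall>a\<in>M. s * a \<in> M)"

definition rideal :: "'a::field set \<Rightarrow> 'a set \<Rightarrow> bool" where
  "rideal R I \<longleftrightarrow> I \<subseteq> R \<and> rsubmod R I"

definition rprime :: "'a::field set \<Rightarrow> 'a set \<Rightarrow> bool" where
  "rprime R P \<longleftrightarrow> rideal R P \<and> P \<noteq> R \<and> (\<forall>a\<in>R. \<forall>b\<in>R. a * b \<in> P \<longrightarrow> a \<in> P \<or> b \<in> P)"

definition rspan :: "'a::field set \<Rightarrow> 'a set \<Rightarrow> 'a set" where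
  "rspan R F = {(\<Sum>f\<in>F. g f * f) | g. \<forall>f\<in>F. g f \<in> R}"

definition noetherian :: "'a::field set \<Rightarrow> bool" where
  "noetherian R \<longleftrightarrow> (\<forall>I. rideal R I \<longrightarrow> (\<exists>F. finite F \<and> F \<subseteq> R \<and> I = rspan R F))"

text \<open>The set of non-units of R; R is local iff this is an ideal (the maximal ideal).\<close>
definition max_ideal :: "'a::field set \<Rightarrow> 'a set" where
  "max_ideal R = {a\<in>R. \<forall>b\<in>R. a * b \<noteq> 1}"

definition local_ring :: "'a::field set \<Rightarrow> bool" where
  "local_ring R \<longleftrightarrow> rideal R (max_ideal R)"

text \<open>Krull dimension one (R is a domain, so the zero ideal is prime).\<close>
definition krull_dim_one :: "'a::field set \<Rightarrow> bool" where
  "krull_dim_one R \<longleftrightarrow> (\<exists>P. rprime R P \<and> P \<noteq> {0}) \<and>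
     (\<forall>P Q. rprime R P \<longrightarrow> rprime R Q \<longrightarrow> P \<subset> Q \<longrightarrow> P = {0})"

text \<open>A one-dimensional local ring is regular iff its maximal ideal is principal.\<close>
definition regular_dim_one :: "'a::field set \<Rightarrow> bool" where
  "regular_dim_one R \<longleftrightarrow> (\<exists>t\<in>R. max_ideal R = {t * a | a. a \<in> R})"

definition int_closure :: "'a::field set \<Rightarrow> 'a set" where
  "int_closure R = {z. \<exists>q :: 'a poly. lead_coeff q = 1 \<and> (\<forall>i. coeff q i \<in> R) \<and> poly q z = 0}"

text \<open>v is a normalized discrete valuation of K whose valuation ring is V
  (values of 0 are irrelevant).\<close>
definition normalized_dvr_valuation :: "('a::field \<Rightarrow> int) \<Rightarrow> 'a set \<Rightarrow> bool" where
  "normalized_dvr_valuation v V \<longleftrightarrow>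
     (\<forall>a b. a \<noteq> 0 \<longrightarrow> b \<noteq> 0 \<longrightarrow> v (a * b) = v a + v b) \<and>
     (\<forall>a b. a \<noteq> 0 \<longrightarrow> b \<noteq> 0 \<longrightarrow> a + b \<noteq> 0 \<longrightarrow> min (v a) (v b) \<le> v (a + b)) \<and>
     (\<exists>t. t \<noteq> 0 \<and> v t = 1) \<and>
     V = {z. z = 0 \<or> 0 \<le> v z}"

text \<open>Length of the R-module M/N, for R-submodules N \<subseteq> M of K: the supremum of
  lengths of strict chains of R-submodules from N to M.\<close>
definition rlength :: "'a::field set \<Rightarrow> 'a set \<Rightarrow> 'a set \<Rightarrow> nat" where
  "rlength R N M = Sup {n. \<exists>f :: nat \<Rightarrow> 'a set. f 0 = N \<and> f n = M \<and>
       (\<forall>i\<le>n. rsubmod R (f i)) \<and> (\<forall>i<n. f i \<subset> f (Suc i))}"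

definition colon :: "'a::field set \<Rightarrow> 'a set \<Rightarrow> 'a set" where
  "colon R M = {z. \<forall>a\<in>M. z * a \<in> R}"

definition value_set :: "('a::field \<Rightarrow> int) \<Rightarrow> 'a set \<Rightarrow> int set" where
  "value_set v R = v ` (R - {0})"

end

theory Submission
  imports Defs
begin

text \<open>Everything is read off from values. Let N \<subseteq> M be R-submodules of K with
  C \<subseteq> N and v bounded below on M. Residual rationality lets one approximate elements of M
  by elements of N with the same value, so M = N once v(M) \<subseteq> v(N); adjoining to N the
  elements of M whose value is at least the largest missing value adds exactly that value,
  so the length of M/N is the number of values of M missing from N.

  For N = C + xR the missing values are the values s < c of R with s - e \<notin> v(R); as k = 2
  these are only 0 and y, so the values of R below c are 0, e, ..., pe and y, y + e, ..., y + le,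
  whence \<delta> = c - p - l - 2. The values of (R : m) outside v(R) include [c - e, c) without pe
  and y + le, and also y - e (the value of w/x for v w = y) when c \<le> 2y - e; then r \<ge> e - 1,
  so r = e - 2 forces 2y - e < c. The rest is integer arithmetic with b = (c - \<delta>) r - \<delta>.\<close>

lemma value_set_mono: "A \<subseteq> B \<Longrightarrow> value_set v A \<subseteq> value_set v B"
  by (auto simp: value_set_def)

lemma max_ideal_subset: "max_ideal R \<subseteq> R"
  by (auto simp: max_ideal_def)

lemma subring_subset_int_closure:
  assumes "is_subring R"
  shows "R \<subseteq> int_closure R"
proof
  fix a assume "a \<in> R"
  then have "\<forall>i. coeff [:- a, 1:] i \<in> R"
    using assms by (auto simp: is_subring_def coeff_pCons split: nat.split)
  then show "a \<in> int_closure R" unfolding int_closure_def by (intro CollectI exI[of _ "[:- a, 1:]"]) simp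
qed

locale valued_subring =
  fixes R :: "'a::field set" and v :: "'a \<Rightarrow> int"
  assumes subring: "is_subring R"
    and val_mult: "\<And>a b. a \<noteq> 0 \<Longrightarrow> b \<noteq> 0 \<Longrightarrow> v (a * b) = v a + v b"
    and val_add: "\<And>a b. a \<noteq> 0 \<Longrightarrow> b \<noteq> 0 \<Longrightarrow> a + b \<noteq> 0 \<Longrightarrow> min (v a) (v b) \<le> v (a + b)"
    and val_nonneg: "\<And>a. a \<in> R \<Longrightarrow> a \<noteq> 0 \<Longrightarrow> 0 \<le> v a"
    and residually_rational: "\<And>z. z \<noteq> 0 \<Longrightarrow> 0 \<le> v z \<Longrightarrow> \<exists>a\<in>R. z - a = 0 \<or> 0 < v (z - a)"
begin

definition val_ge :: "int \<Rightarrow> 'a set" where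
  "val_ge n = {w. w = 0 \<or> n \<le> v w}"

lemma subring_zero: "0 \<in> R" and subring_one: "1 \<in> R"
  and subring_add: "a \<in> R \<Longrightarrow> b \<in> R \<Longrightarrow> a + b \<in> R"
  and subring_mult: "a \<in> R \<Longrightarrow> b \<in> R \<Longrightarrow> a * b \<in> R"
  and subring_uminus: "a \<in> R \<Longrightarrow> - a \<in> R"
  using subring unfolding is_subring_def by auto

lemma subring_power: "a \<in> R \<Longrightarrow> a ^ n \<in> R"
  by (induction n) (auto intro: subring_one subring_mult)

lemma subring_sum: "finite F \<Longrightarrow> (\<And>f. f \<in> F \<Longrightarrow> g f \<in> R) \<Longrightarrow> sum g F \<in> R"
  by (induction F rule: finite_induct) (auto intro: subring_zero subring_add)

lemma subring_prod: "finite F \<Longrightarrow> (\<And>f. f \<in> F \<Longrightarrow> g f \<in> R) \<Longrightarrow> prod g F \<in> R"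
  by (induction F rule: finite_induct) (auto intro: subring_one subring_mult)

lemma val_one: "v 1 = 0"
  using val_mult[of 1 1] by simp

lemma val_uminus: "a \<noteq> 0 \<Longrightarrow> v (- a) = v a"
  using val_mult[of "-1" a] val_mult[of "-1" "-1"] val_one by simp

lemma val_divide: "a \<noteq> 0 \<Longrightarrow> b \<noteq> 0 \<Longrightarrow> v (a / b) = v a - v b"
  using val_mult[of b "a / b"] by simp

lemma val_power: "a \<noteq> 0 \<Longrightarrow> v (a ^ n) = int n * v a"
  by (induction n) (auto simp: val_one val_mult algebra_simps)

lemma val_add_strict:
  assumes "a \<noteq> 0" "b \<noteq> 0" "v a < v b"
  shows "a + b \<noteq> 0" "v (a + b) = v a"
proof -
  show ab: "a + b \<noteq> 0"
  proof
    assume "a + b = 0"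
    then have "b = - a" by (simp add: eq_neg_iff_add_eq_0 add.commute)
    then show False using assms val_uminus by simp
  qed
  have "min (v (a + b)) (v (- b)) \<le> v (a + b + - b)"
    using val_add[of "a + b" "- b"] assms ab by simp
  then show "v (a + b) = v a"
    using val_add[of a b] assms ab val_uminus[of b] by auto
qed

lemma val_le_mult: "s \<in> R \<Longrightarrow> s \<noteq> 0 \<Longrightarrow> a \<noteq> 0 \<Longrightarrow> v a \<le> v (s * a)"
  using val_mult val_nonneg by fastforce

lemma value_set_zero: "0 \<in> value_set v R"
  using subring_one val_one by (force simp: value_set_def)

lemma value_set_add: "a \<in> value_set v R \<Longrightarrow> b \<in> value_set v R \<Longrightarrow> a + b \<in> value_set v R"
proof -
  assume "a \<in> value_set v R" "b \<in> value_set v R"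
  then obtain u w where "u \<in> R" "u \<noteq> 0" "a = v u" "w \<in> R" "w \<noteq> 0" "b = v w"
    by (auto simp: value_set_def)
  then have "u * w \<in> R - {0}" "a + b = v (u * w)" using subring_mult val_mult by auto
  then show ?thesis unfolding value_set_def by blast
qed

lemma value_set_nonneg: "s \<in> value_set v R \<Longrightarrow> 0 \<le> s"
  using val_nonneg by (auto simp: value_set_def)

lemma rsubmod_subring: "rsubmod R R"
  unfolding rsubmod_def using subring_zero subring_add subring_mult by blast

lemma rsubmod_val_ge: "rsubmod R (val_ge n)"
  unfolding rsubmod_def val_ge_def
proof (intro conjI ballI)
  fix a b assume a: "a \<in> {w. w = 0 \<or> n \<le> v w}" and b: "b \<in> {w. w = 0 \<or> n \<le> v w}"
  show "a + b \<in> {w. w = 0 \<or> n \<le> v w}"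
    using a b val_add[of a b] by (cases "a = 0 \<or> b = 0 \<or> a + b = 0") auto
next
  fix s a assume s: "s \<in> R" and a: "a \<in> {w. w = 0 \<or> n \<le> v w}"
  show "s * a \<in> {w. w = 0 \<or> n \<le> v w}"
    using a val_le_mult[OF s] by (cases "s = 0 \<or> a = 0") force+
qed simp

lemma rsubmod_principal: "a \<in> R \<Longrightarrow> rsubmod R {a * s | s. s \<in> R}"
  unfolding rsubmod_def
proof (intro conjI ballI)
  show "0 \<in> {a * s | s. s \<in> R}" using subring_zero by force
next
  fix u w assume "u \<in> {a * s | s. s \<in> R}" "w \<in> {a * s | s. s \<in> R}"
  then obtain s1 s2 where "u = a * s1" "w = a * s2" "s1 \<in> R" "s2 \<in> R" by auto
  then show "u + w \<in> {a * s | s. s \<in> R}"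
    using subring_add by (intro CollectI exI[of _ "s1 + s2"]) (auto simp: algebra_simps)
next
  fix r u assume r: "r \<in> R" and "u \<in> {a * s | s. s \<in> R}"
  then obtain s1 where "u = a * s1" "s1 \<in> R" by auto
  then show "r * u \<in> {a * s | s. s \<in> R}"
    using subring_mult r by (intro CollectI exI[of _ "r * s1"]) (auto simp: algebra_simps)
qed

lemma in_max_ideal_if_val_pos: "a \<in> R \<Longrightarrow> a \<noteq> 0 \<Longrightarrow> 0 < v a \<Longrightarrow> a \<in> max_ideal R"
proof -
  assume a: "a \<in> R" "a \<noteq> 0" "0 < v a"
  have "a * b \<noteq> 1" if "b \<in> R" for b
  proof
    assume ab: "a * b = 1"
    then have "b \<noteq> 0" by auto
    then have "0 < v (a * b)" using val_mult[of a b] a val_nonneg[OF that] by simp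
    then show False using ab val_one by simp
  qed
  then show ?thesis using a by (auto simp: max_ideal_def)
qed

lemma value_raising_step:
  assumes "z \<noteq> 0" "n \<noteq> 0" "v n = v z"
  obtains a where "a \<in> R" "z - a * n = 0 \<or> v z < v (z - a * n)"
proof -
  have "v (z / n) = 0" using assms val_divide by simp
  then obtain a where a: "a \<in> R" "z / n - a = 0 \<or> 0 < v (z / n - a)"
    using residually_rational[of "z / n"] assms by auto
  have eq: "z - a * n = n * (z / n - a)" using assms by (simp add: algebra_simps)
  have "v z < v (z - a * n)" if "z - a * n \<noteq> 0"
    using that a assms val_mult[of n "z / n - a"] unfolding eq by auto
  then have "z - a * n = 0 \<or> v z < v (z - a * n)" by blast
  then show ?thesis using a that by blast
qed

text \<open>Descent on T - v z: an element of N with the same value as z is subtracted from z,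
  which raises its value by residual rationality.\<close>

lemma subset_by_value_approximation:
  assumes N: "rsubmod R N" and M: "rsubmod R M"
    and high: "\<And>w. w \<in> M \<Longrightarrow> w \<noteq> 0 \<Longrightarrow> T \<le> v w \<Longrightarrow> w \<in> N"
    and realized: "\<And>w. w \<in> M \<Longrightarrow> w \<noteq> 0 \<Longrightarrow> \<exists>n\<in>N \<inter> M. n \<noteq> 0 \<and> v n = v w"
  shows "M \<subseteq> N"
proof
  fix z assume "z \<in> M"
  then show "z \<in> N"
  proof (induction "nat (T - v z)" arbitrary: z rule: less_induct)
    case (less z)
    show ?case
    proof (cases "z = 0 \<or> T \<le> v z")
      case True then show ?thesis using N high less.prems unfolding rsubmod_def by blast
    next
      case False
      obtain n where n: "n \<in> N" "n \<in> M" "n \<noteq> 0" "v n = v z" using realized less.prems False by blast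
      obtain a where a: "a \<in> R" "z - a * n = 0 \<or> v z < v (z - a * n)"
        using value_raising_step[of z n] False n by blast
      have an: "a * n \<in> N" using N a n unfolding rsubmod_def by blast
      have "(- a) * n \<in> M" using M subring_uminus[OF a(1)] n(2) unfolding rsubmod_def by blast
      then have "z + (- a) * n \<in> M" using M less.prems unfolding rsubmod_def by blast
      then have "z - a * n \<in> M" by simp
      have "z - a * n \<in> N"
      proof (cases "z - a * n = 0")
        case True then show ?thesis using N unfolding rsubmod_def by simp
      next
        case False
        then have "nat (T - v (z - a * n)) < nat (T - v z)" using a \<open>\<not> (z = 0 \<or> T \<le> v z)\<close> by auto
        then show ?thesis using less.hyps \<open>z - a * n \<in> M\<close> by blast
      qed
      then have "(z - a * n) + a * n \<in> N" using an N unfolding rsubmod_def by blast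
      then show ?thesis by simp
    qed
  qed
qed

lemma val_ge_subset_if_common_denominator:
  assumes d: "d \<in> R" "d \<noteq> 0" "\<And>z. z \<noteq> 0 \<Longrightarrow> 0 \<le> v z \<Longrightarrow> d * z \<in> R"
    and tail: "{n..} \<subseteq> value_set v R"
  shows "val_ge n \<subseteq> R"
proof (rule subset_by_value_approximation[OF rsubmod_subring rsubmod_val_ge, where T = "v d"])
  fix u assume "u \<noteq> 0" "v d \<le> v u"
  then have "d * (u / d) \<in> R" using d(3)[of "u / d"] d val_divide by simp
  then show "u \<in> R" using d by simp
next
  fix u assume "u \<in> val_ge n" "u \<noteq> 0"
  then have "v u \<in> value_set v R" using tail by (auto simp: val_ge_def)
  then obtain m where "m \<in> R - {0}" "v u = v m" unfolding value_set_def by blast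
  then show "\<exists>m\<in>R \<inter> val_ge n. m \<noteq> 0 \<and> v m = v u"
    using \<open>u \<in> val_ge n\<close> \<open>u \<noteq> 0\<close> by (auto simp: val_ge_def)
qed

lemma rsubmod_colon: "rsubmod R (colon R I)"
  unfolding rsubmod_def colon_def
proof (intro conjI ballI CollectI)
  fix a show "0 * a \<in> R" using subring_zero by simp
next
  fix u w a assume "u \<in> {z. \<forall>a\<in>I. z * a \<in> R}" "w \<in> {z. \<forall>a\<in>I. z * a \<in> R}" "a \<in> I"
  then show "(u + w) * a \<in> R" using subring_add by (simp add: algebra_simps)
next
  fix s u a assume "s \<in> R" "u \<in> {z. \<forall>a\<in>I. z * a \<in> R}" "a \<in> I"
  then show "(s * u) * a \<in> R" using subring_mult by (simp add: mult.assoc)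
qed

lemma subring_subset_colon: "I \<subseteq> R \<Longrightarrow> R \<subseteq> colon R I"
  unfolding colon_def using subring_mult by blast

lemma rsubmod_Int: "rsubmod R A \<Longrightarrow> rsubmod R B \<Longrightarrow> rsubmod R (A \<inter> B)"
  by (simp add: rsubmod_def)

lemma rsubmod_sum:
  assumes A: "rsubmod R A" and B: "rsubmod R B"
  shows "rsubmod R {a + b | a b. a \<in> A \<and> b \<in> B}"
  unfolding rsubmod_def
proof (intro conjI ballI)
  have "0 + 0 \<in> {a + b | a b. a \<in> A \<and> b \<in> B}" using A B unfolding rsubmod_def by blast
  then show "0 \<in> {a + b | a b. a \<in> A \<and> b \<in> B}" by simp
next
  fix u w assume "u \<in> {a + b | a b. a \<in> A \<and> b \<in> B}" "w \<in> {a + b | a b. a \<in> A \<and> b \<in> B}"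
  then obtain a1 b1 a2 b2 where "u = a1 + b1" "w = a2 + b2" "a1 \<in> A" "a2 \<in> A" "b1 \<in> B" "b2 \<in> B"
    by blast
  moreover have "u + w = (a1 + a2) + (b1 + b2)" using calculation by (simp add: algebra_simps)
  ultimately show "u + w \<in> {a + b | a b. a \<in> A \<and> b \<in> B}" using A B unfolding rsubmod_def by blast
next
  fix s u assume "s \<in> R" "u \<in> {a + b | a b. a \<in> A \<and> b \<in> B}"
  then obtain a b where "u = a + b" "a \<in> A" "b \<in> B" by blast
  moreover have "s * u = s * a + s * b" using calculation by (simp add: algebra_simps)
  ultimately show "s * u \<in> {a + b | a b. a \<in> A \<and> b \<in> B}"
    using A B \<open>s \<in> R\<close> unfolding rsubmod_def by blast
qed

lemma rsubmod_add_principal: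
  assumes "rsubmod R I" "x \<in> R"
  shows "rsubmod R {a + x * s | a s. a \<in> I \<and> s \<in> R}"
proof -
  have "{a + x * s | a s. a \<in> I \<and> s \<in> R} = {a + b | a b. a \<in> I \<and> b \<in> {x * s | s. s \<in> R}}"
    by blast
  then show ?thesis using rsubmod_sum[OF assms(1) rsubmod_principal[OF assms(2)]] by simp
qed

lemma value_set_sum_val_ge: "value_set v {a + b | a b. a \<in> N \<and> b \<in> val_ge g} \<subseteq> value_set v N \<union> {g..}"
proof
  fix d assume "d \<in> value_set v {a + b | a b. a \<in> N \<and> b \<in> val_ge g}"
  then obtain a b where ab: "a + b \<noteq> 0" "d = v (a + b)" "a \<in> N" "b \<in> val_ge g"
    unfolding value_set_def by blast
  show "d \<in> value_set v N \<union> {g..}"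
  proof (cases "b = 0 \<or> (a \<noteq> 0 \<and> v a < v b)")
    case True
    then have "a \<noteq> 0 \<and> d = v a" using ab val_add_strict(2)[of a b] by (cases "b = 0") auto
    then have "a \<in> N - {0}" "d = v a" using ab by auto
    then show ?thesis unfolding value_set_def by blast
  next
    case high: False
    then have b: "b \<noteq> 0" "g \<le> v b" using ab by (auto simp: val_ge_def)
    show ?thesis
    proof (cases "a = 0")
      case True then show ?thesis using ab b by simp
    next
      case False
      then have "v b \<le> d" using val_add[OF False b(1)] ab high by auto
      then show ?thesis using b by simp
    qed
  qed
qed

lemma mem_colon_by_value_approximation:
  assumes I: "rsubmod R I"
    and high: "\<And>u. u \<in> I \<Longrightarrow> u \<noteq> 0 \<Longrightarrow> T \<le> v u \<Longrightarrow> z * u \<in> R"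
    and realized: "\<And>u. u \<in> I \<Longrightarrow> u \<noteq> 0 \<Longrightarrow> \<exists>n\<in>I. n \<noteq> 0 \<and> v n = v u \<and> z * n \<in> R"
  shows "z \<in> colon R I"
proof -
  let ?N = "{a \<in> I. z * a \<in> R}"
  have "rsubmod R ?N"
    unfolding rsubmod_def
  proof (intro conjI ballI)
    show "0 \<in> ?N" using I subring_zero unfolding rsubmod_def by simp
  next
    fix a b assume "a \<in> ?N" "b \<in> ?N"
    then show "a + b \<in> ?N" using I subring_add unfolding rsubmod_def by (simp add: algebra_simps)
  next
    fix s a assume "s \<in> R" "a \<in> ?N"
    then have "s * (z * a) \<in> R" "s * a \<in> I" using I subring_mult unfolding rsubmod_def by auto
    then show "s * a \<in> ?N" by (simp add: mult.left_commute)
  qed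
  then have "I \<subseteq> ?N"
    by (rule subset_by_value_approximation[OF _ I, where T = T]) (use high realized in auto)
  then show ?thesis unfolding colon_def by blast
qed

lemma common_denominator:
  assumes qf: "quotient_field_is_univ R" and F: "finite F" "val_ge 0 = rspan R F"
  obtains d where "d \<in> R" "d \<noteq> 0" "\<And>z. z \<noteq> 0 \<Longrightarrow> 0 \<le> v z \<Longrightarrow> d * z \<in> R"
proof -
  have "\<exists>b. b \<in> R \<and> b \<noteq> 0 \<and> b * f \<in> R" for f
  proof -
    obtain a b where "a \<in> R" "b \<in> R" "b \<noteq> 0" "f = a / b"
      using qf unfolding quotient_field_is_univ_def by blast
    then show ?thesis by (intro exI[of _ b]) simp
  qed
  then obtain den where den: "\<And>f. den f \<in> R" "\<And>f. den f \<noteq> 0" "\<And>f. den f * f \<in> R" by metis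
  define d where "d = (\<Prod>f\<in>F. den f)"
  have d_mult: "d * f \<in> R" if "f \<in> F" for f
  proof -
    have "d = den f * (\<Prod>g\<in>F - {f}. den g)" unfolding d_def by (rule prod.remove[OF F(1) that])
    then have "d * f = (den f * f) * (\<Prod>g\<in>F - {f}. den g)" by (simp add: algebra_simps)
    moreover have "(\<Prod>g\<in>F - {f}. den g) \<in> R" using subring_prod[of "F - {f}"] F(1) den(1) by blast
    then have "(den f * f) * (\<Prod>g\<in>F - {f}. den g) \<in> R" by (rule subring_mult[OF den(3)])
    ultimately show ?thesis by (simp only:)
  qed
  show ?thesis
  proof
    show "d \<in> R" "d \<noteq> 0" unfolding d_def using subring_prod F(1) den by auto
  next
    fix z assume "z \<noteq> 0" "0 \<le> v z"
    then have "z \<in> val_ge 0" by (simp add: val_ge_def)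
    then have "z \<in> rspan R F" using F(2) by simp
    then obtain g where g: "z = (\<Sum>f\<in>F. g f * f)" "\<forall>f\<in>F. g f \<in> R" unfolding rspan_def by blast
    have "d * z = (\<Sum>f\<in>F. g f * (d * f))" unfolding g(1) sum_distrib_left by (simp add: algebra_simps)
    then show "d * z \<in> R" using subring_sum[OF F(1)] g(2) d_mult subring_mult by simp
  qed
qed

end

lemma valued_subring_if_int_closure_dvr:
  assumes subring: "is_subring R" and dvr: "normalized_dvr_valuation v (int_closure R)"
    and residually_rational: "\<forall>z\<in>int_closure R. \<exists>a\<in>R. z - a = 0 \<or> 0 < v (z - a)"
  shows "valued_subring R v"
proof
  have closure: "int_closure R = {z. z = 0 \<or> 0 \<le> v z}"
    using dvr by (simp add: normalized_dvr_valuation_def)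
  show "0 \<le> v a" if "a \<in> R" "a \<noteq> 0" for a
    using that subring_subset_int_closure[OF subring] closure by auto
  show "\<exists>a\<in>R. z - a = 0 \<or> 0 < v (z - a)" if "z \<noteq> 0" "0 \<le> v z" for z
    using that residually_rational closure by auto
qed (use assms in \<open>auto simp: normalized_dvr_valuation_def\<close>)

locale conductor_subring = valued_subring +
  fixes c :: int
  assumes conductor_subset: "val_ge c \<subseteq> R"
begin

lemma subset_if_value_set_subset:
  assumes N: "rsubmod R N" and M: "rsubmod R M" and "N \<subseteq> M" and "val_ge c \<subseteq> N"
    and "value_set v M \<subseteq> value_set v N"
  shows "M \<subseteq> N"
proof (rule subset_by_value_approximation[OF N M, where T = c])
  fix w assume "w \<noteq> 0" "c \<le> v w" then show "w \<in> N" using assms(4) by (auto simp: val_ge_def)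
next
  fix w assume "w \<in> M" "w \<noteq> 0"
  then have "v w \<in> value_set v N" using assms(5) by (auto simp: value_set_def)
  then show "\<exists>n\<in>N \<inter> M. n \<noteq> 0 \<and> v n = v w" using assms(3) by (auto simp: value_set_def)
qed

lemma value_gap_subset:
  assumes "val_ge c \<subseteq> N" and bound: "\<And>w. w \<in> M \<Longrightarrow> w \<noteq> 0 \<Longrightarrow> L \<le> v w"
  shows "value_set v M - value_set v N \<subseteq> {L..<c}"
proof
  fix g assume "g \<in> value_set v M - value_set v N"
  then obtain w where w: "w \<in> M" "w \<noteq> 0" "v w = g" "g \<notin> value_set v N"
    by (auto simp: value_set_def)
  then have "w \<notin> N" by (auto simp: value_set_def)
  have "g < c"
  proof (rule ccontr)
    assume "\<not> g < c"
    then have "w \<in> val_ge c" using w by (simp add: val_ge_def)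
    then show False using assms(1) \<open>w \<notin> N\<close> by blast
  qed
  then show "g \<in> {L..<c}" using bound w by auto
qed

lemma finite_value_gap:
  assumes "val_ge c \<subseteq> N" and "\<And>w. w \<in> M \<Longrightarrow> w \<noteq> 0 \<Longrightarrow> L \<le> v w"
  shows "finite (value_set v M - value_set v N)"
  using finite_subset[OF value_gap_subset[OF assms]] by simp

lemma chain_length_le_value_gap:
  assumes N: "val_ge c \<subseteq> N" and bound: "\<And>w. w \<in> M \<Longrightarrow> w \<noteq> 0 \<Longrightarrow> L \<le> v w"
    and f: "f 0 = N" "f n = M" "\<forall>i\<le>n. rsubmod R (f i)" "\<forall>i<n. f i \<subset> f (Suc i)"
  shows "n \<le> card (value_set v M - value_set v N)"
proof -
  let ?gap = "\<lambda>A. value_set v A - value_set v N"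
  have fin: "finite (?gap M)" using finite_value_gap[OF N bound] .
  have mono: "f i \<subseteq> f j" if "i \<le> j" "j \<le> n" for i j
    using that
  proof (induction j)
    case (Suc j)
    show ?case
    proof (cases "i = Suc j")
      case False
      then have "f i \<subseteq> f j" using Suc by simp
      also have "f j \<subseteq> f (Suc j)" using f(4)[rule_format, of j] Suc.prems by auto
      finally show ?thesis .
    qed simp
  qed simp
  have "i \<le> card (?gap (f i))" if "i \<le> n" for i
    using that
  proof (induction i)
    case (Suc i)
    have step: "f i \<subset> f (Suc i)" using f(4) Suc by simp
    have Ni: "N \<subseteq> f i" using mono[of 0 i] f Suc by simp
    have "\<not> value_set v (f (Suc i)) \<subseteq> value_set v (f i)"
      using subset_if_value_set_subset[of "f i" "f (Suc i)"] f(3) Suc step Ni N by auto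
    then have "?gap (f i) \<subset> ?gap (f (Suc i))"
      using value_set_mono[of "f i" "f (Suc i)" v] value_set_mono[OF Ni, of v] step by blast
    moreover have "finite (?gap (f (Suc i)))"
      using value_set_mono[OF mono[of "Suc i" n], of v] f(2) Suc.prems fin by (metis Diff_mono finite_subset order_refl)
    ultimately have "card (?gap (f i)) < card (?gap (f (Suc i)))" by (rule psubset_card_mono[rotated])
    then show ?case using Suc by simp
  qed simp
  then show ?thesis using f(2) by (metis order_refl)
qed

lemma submodule_adding_max_missing_value:
  assumes N: "rsubmod R N" and M: "rsubmod R M" and NM: "N \<subseteq> M"
    and g: "g \<in> value_set v M - value_set v N"
    and gmax: "\<And>d. d \<in> value_set v M - value_set v N \<Longrightarrow> d \<le> g"
  defines "N' \<equiv> {a + b | a b. a \<in> N \<and> b \<in> M \<inter> val_ge g}"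
  shows "rsubmod R N'" "N \<subseteq> N'" "N' \<subseteq> M" "value_set v N' = insert g (value_set v N)"
proof -
  show "rsubmod R N'" unfolding N'_def by (rule rsubmod_sum[OF N rsubmod_Int[OF M rsubmod_val_ge]])
  have zero: "0 \<in> N" "0 \<in> M \<inter> val_ge g" using N M unfolding rsubmod_def val_ge_def by auto
  show NN': "N \<subseteq> N'"
  proof
    fix a assume "a \<in> N"
    then have "a + 0 \<in> N'" using zero unfolding N'_def by blast
    then show "a \<in> N'" by simp
  qed
  show N'M: "N' \<subseteq> M" using NM M unfolding N'_def rsubmod_def by blast
  show "value_set v N' = insert g (value_set v N)"
  proof
    obtain w where "w \<in> M - {0}" "g = v w" using g unfolding value_set_def by blast
    moreover have "w \<in> M \<inter> val_ge g" using \<open>w \<in> M - {0}\<close> \<open>g = v w\<close> by (simp add: val_ge_def)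
    then have "0 + w \<in> N'" using zero unfolding N'_def by blast
    ultimately have "g \<in> value_set v N'" unfolding value_set_def by auto
    then show "insert g (value_set v N) \<subseteq> value_set v N'" using value_set_mono[OF NN'] by blast
  next
    have "N' \<subseteq> {a + b | a b. a \<in> N \<and> b \<in> val_ge g}" unfolding N'_def by blast
    then have "value_set v N' \<subseteq> value_set v N \<union> {g..}"
      using value_set_sum_val_ge value_set_mono by blast
    moreover have "value_set v N' \<subseteq> value_set v M" using value_set_mono[OF N'M] .
    ultimately show "value_set v N' \<subseteq> insert g (value_set v N)" using gmax by fastforce
  qed
qed

lemma chain_of_value_gap_length:
  assumes M: "rsubmod R M" and bound: "\<And>w. w \<in> M \<Longrightarrow> w \<noteq> 0 \<Longrightarrow> L \<le> v w"
  shows "rsubmod R N \<Longrightarrow> N \<subseteq> M \<Longrightarrow> val_ge c \<subseteq> N \<Longrightarrow>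
    card (value_set v M - value_set v N) = n \<Longrightarrow>
    \<exists>f. f 0 = N \<and> f n = M \<and> (\<forall>i\<le>n. rsubmod R (f i)) \<and> (\<forall>i<n. f i \<subset> f (Suc i))"
proof (induction n arbitrary: N)
  case 0
  then have "value_set v M \<subseteq> value_set v N" using finite_value_gap[OF 0(3) bound] by auto
  then have "M = N" using subset_if_value_set_subset[OF 0(1) M 0(2,3)] 0(2) by auto
  then show ?case using 0 by (intro exI[of _ "\<lambda>_. N"]) auto
next
  case (Suc n)
  let ?gap = "value_set v M - value_set v N"
  have fin: "finite ?gap" using finite_value_gap[OF Suc(4) bound] .
  have "?gap \<noteq> {}" using Suc(5) by (intro notI) simp
  then have g: "Max ?gap \<in> ?gap" using fin by (rule Max_in[rotated])
  obtain N' where N': "rsubmod R N'" "N \<subseteq> N'" "N' \<subseteq> M"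
    "value_set v N' = insert (Max ?gap) (value_set v N)"
    using submodule_adding_max_missing_value[OF Suc(2) M Suc(3) g] fin by auto
  have "value_set v M - value_set v N' = ?gap - {Max ?gap}" using N'(4) by auto
  then have "card (value_set v M - value_set v N') = n" using Suc(5) g fin by simp
  then obtain f where f: "f 0 = N'" "f n = M" "\<forall>i\<le>n. rsubmod R (f i)" "\<forall>i<n. f i \<subset> f (Suc i)"
    using Suc.IH[OF N'(1,3)] Suc(4) N'(2) by blast
  have "N \<subset> N'" using N'(2,4) g by auto
  show ?case
  proof (intro exI[of _ "\<lambda>i. if i = 0 then N else f (i - 1)"] conjI allI impI)
    fix i assume "i \<le> Suc n"
    then show "rsubmod R (if i = 0 then N else f (i - 1))" using f Suc(2) by auto
  next
    fix i assume "i < Suc n"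
    then show "(if i = 0 then N else f (i - 1)) \<subset> (if Suc i = 0 then N else f (Suc i - 1))"
      using f \<open>N \<subset> N'\<close> by (cases i) auto
  qed (use f in auto)
qed

lemma rlength_eq_card_value_gap:
  assumes "rsubmod R N" "rsubmod R M" "N \<subseteq> M" "val_ge c \<subseteq> N"
    and bound: "\<And>w. w \<in> M \<Longrightarrow> w \<noteq> 0 \<Longrightarrow> L \<le> v w"
  shows "rlength R N M = card (value_set v M - value_set v N)"
  unfolding rlength_def
proof (rule cSup_eq_maximum)
  show "card (value_set v M - value_set v N) \<in> {n. \<exists>f. f 0 = N \<and> f n = M \<and>
      (\<forall>i\<le>n. rsubmod R (f i)) \<and> (\<forall>i<n. f i \<subset> f (Suc i))}"
    using chain_of_value_gap_length[OF assms(2) bound assms(1,3,4)] by blast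
qed (use chain_length_le_value_gap[OF assms(4) bound] in blast)

lemma val_pos_if_in_max_ideal:
  assumes a: "a \<in> max_ideal R" "a \<noteq> 0"
  shows "0 < v a"
proof (rule ccontr)
  assume "\<not> 0 < v a"
  have aR: "a \<in> R" using a max_ideal_subset by blast
  then have va: "v a = 0" using val_nonneg a \<open>\<not> 0 < v a\<close> by force
  let ?aR = "{a * s | s. s \<in> R}"
  have conductor: "val_ge c \<subseteq> ?aR"
  proof
    fix w assume w: "w \<in> val_ge c"
    have "w / a \<in> val_ge c" using w val_divide[of w a] va a(2) by (cases "w = 0") (auto simp: val_ge_def)
    then have "w / a \<in> R" using conductor_subset by blast
    then show "w \<in> ?aR" using a(2) by (intro CollectI exI[of _ "w / a"]) simp
  qed
  have "value_set v R \<subseteq> value_set v ?aR"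
  proof
    fix g assume "g \<in> value_set v R"
    then obtain s where s: "s \<in> R" "s \<noteq> 0" "v s = g" by (auto simp: value_set_def)
    then have "a * s \<in> ?aR - {0}" "v (a * s) = g" using val_mult[of a s] va a(2) by auto
    then show "g \<in> value_set v ?aR" unfolding value_set_def by blast
  qed
  moreover have "?aR \<subseteq> R" using aR subring_mult by auto
  ultimately have "R \<subseteq> ?aR"
    using subset_if_value_set_subset[OF rsubmod_principal[OF aR] rsubmod_subring _ conductor] by blast
  then obtain s where "s \<in> R" "1 = a * s" using subring_one by auto
  then show False using a by (auto simp: max_ideal_def)
qed

end

locale k_two = conductor_subring +
  fixes e :: int and x :: 'a and y p l :: int and t :: 'a
  assumes conductor_value: "c \<in> value_set v R"
    and conductor_tail: "{c..} \<subseteq> value_set v R"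
    and conductor_least: "\<And>c'. c' \<in> value_set v R \<Longrightarrow> {c'..} \<subseteq> value_set v R \<Longrightarrow> c \<le> c'"
    and e_pos: "0 < e" and e_least: "\<And>s. s \<in> value_set v R \<Longrightarrow> 0 < s \<Longrightarrow> e \<le> s"
    and x_max_ideal: "x \<in> max_ideal R" and x_nonzero: "x \<noteq> 0" and val_x: "v x = e"
    and local: "local_ring R"
    and not_regular: "\<not> regular_dim_one R"
    and uniformizer: "t \<noteq> 0" "v t = 1"
    and p_bounds: "c - e \<le> p * e" "p * e < c"
    and y_props: "y \<in> value_set v R" "0 < y" "y < c" "y - e \<notin> value_set v R"
    and l_bounds: "0 \<le> l" "y + l * e < c" "c \<le> y + (l + 1) * e"
    and length_two: "rlength R {a + x * s | a s. a \<in> colon R (val_ge 0) \<and> s \<in> R} R = 2"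
begin

lemma x_in_R: "x \<in> R"
  using x_max_ideal max_ideal_subset by blast

lemma rsubmod_max_ideal: "rsubmod R (max_ideal R)"
  using local by (simp add: local_ring_def rideal_def)

lemma val_uniformizer_power: "v (t ^ n) = int n" "t ^ n \<noteq> 0"
  using val_power[OF uniformizer(1)] uniformizer by auto

lemma mult_e_in_value_set:
  assumes "0 \<le> i" shows "i * e \<in> value_set v R"
proof -
  have "x ^ nat i \<in> R - {0}" using subring_power[OF x_in_R] x_nonzero by simp
  moreover have "i * e = v (x ^ nat i)" using val_power[OF x_nonzero] val_x assms by simp
  ultimately show ?thesis unfolding value_set_def by blast
qed

lemma e_le_val_if_in_max_ideal:
  assumes "a \<in> max_ideal R" "a \<noteq> 0" shows "e \<le> v a"
proof -
  have "v a \<in> value_set v R" using assms max_ideal_subset unfolding value_set_def by blast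
  then show ?thesis using e_least val_pos_if_in_max_ideal[OF assms] by blast
qed

text \<open>If c = 0 then R is the DVR itself: its maximal ideal would be generated by x.\<close>

lemma c_pos: "0 < c"
proof (rule ccontr)
  assume "\<not> 0 < c"
  then have c0: "c = 0" using value_set_nonneg conductor_value by force
  then have "1 \<in> value_set v R" using conductor_tail by auto
  then have e1: "e = 1" using e_least[of 1] e_pos by simp
  have "max_ideal R \<subseteq> {x * a | a. a \<in> R}"
  proof
    fix b assume b: "b \<in> max_ideal R"
    have "b / x \<in> R"
    proof (cases "b = 0")
      case False
      then have "1 \<le> v b" using e_le_val_if_in_max_ideal b e1 by simp
      then show ?thesis using conductor_subset val_divide[OF False x_nonzero] val_x e1 c0
        by (auto simp: val_ge_def)
    qed (simp add: subring_zero)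
    then show "b \<in> {x * a | a. a \<in> R}" using x_nonzero by force
  qed
  moreover have "{x * a | a. a \<in> R} \<subseteq> max_ideal R"
    using rsubmod_max_ideal x_max_ideal unfolding rsubmod_def by (auto simp: mult.commute)
  ultimately have "regular_dim_one R" using x_in_R unfolding regular_dim_one_def by blast
  then show False using not_regular by simp
qed

lemma conductor_pred_not_value: "c - 1 \<notin> value_set v R"
proof
  assume pred: "c - 1 \<in> value_set v R"
  have "{c - 1..} \<subseteq> value_set v R"
  proof
    fix g assume "g \<in> {c - 1..}"
    then show "g \<in> value_set v R" using pred conductor_tail by (cases "g = c - 1") auto
  qed
  then show False using conductor_least[OF pred] by simp
qed

lemma e_le_c: "e \<le> c"
  using e_least[OF conductor_value c_pos] .

lemma p_nonneg: "0 \<le> p"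
proof -
  have "0 < (p + 1) * e" using p_bounds c_pos by (simp add: algebra_simps)
  then show ?thesis using e_pos by (simp add: zero_less_mult_iff)
qed

lemma e_less_y: "e < y"
  using e_least[OF y_props(1,2)] y_props(4) value_set_zero by (cases "y = e") auto

lemma y_not_mult_e: "y \<noteq> j * e"
proof
  assume y: "y = j * e"
  then have "0 < j" using y_props(2) e_pos by (simp add: zero_less_mult_iff)
  then show False using y y_props(4) mult_e_in_value_set[of "j - 1"] by (simp add: algebra_simps)
qed

lemma colon_int_closure: "colon R (val_ge 0) = val_ge c"
proof
  show "colon R (val_ge 0) \<subseteq> val_ge c"
  proof
    fix z assume z: "z \<in> colon R (val_ge 0)"
    show "z \<in> val_ge c"
    proof (rule ccontr)
      assume "z \<notin> val_ge c"
      then have z0: "z \<noteq> 0" and "v z < c" by (auto simp: val_ge_def)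
      have "1 \<in> val_ge 0" using val_one by (simp add: val_ge_def)
      then have "z * 1 \<in> R" using z unfolding colon_def by blast
      then have "0 \<le> v z" using val_nonneg z0 by simp
      define j where "j = nat (c - 1 - v z)"
      have "t ^ j \<in> val_ge 0" using val_uniformizer_power[of j] by (simp add: val_ge_def)
      then have "z * t ^ j \<in> R - {0}"
        using z z0 val_uniformizer_power(2) unfolding colon_def by simp
      moreover have "c - 1 = v (z * t ^ j)"
        using val_mult[OF z0 val_uniformizer_power(2)] val_uniformizer_power(1) \<open>v z < c\<close> \<open>0 \<le> v z\<close>
        by (simp add: j_def)
      ultimately have "c - 1 \<in> value_set v R" unfolding value_set_def by (rule image_eqI[rotated])
      then show False using conductor_pred_not_value by simp
    qed
  qed
next
  show "val_ge c \<subseteq> colon R (val_ge 0)"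
    unfolding colon_def
  proof (intro subsetI CollectI ballI)
    fix z a assume "z \<in> val_ge c" "a \<in> val_ge 0"
    then have "z * a \<in> val_ge c" by (cases "z = 0 \<or> a = 0") (auto simp: val_ge_def val_mult)
    then show "z * a \<in> R" using conductor_subset by blast
  qed
qed

lemma value_set_val_ge: "0 \<le> n \<Longrightarrow> value_set v (val_ge n) = {n..}"
proof
  show "value_set v (val_ge n) \<subseteq> {n..}" by (auto simp: value_set_def val_ge_def)
next
  assume "0 \<le> n"
  show "{n..} \<subseteq> value_set v (val_ge n)"
  proof
    fix g assume "g \<in> {n..}"
    then have "t ^ nat g \<in> val_ge n - {0}" "g = v (t ^ nat g)"
      using \<open>0 \<le> n\<close> val_uniformizer_power[of "nat g"] by (auto simp: val_ge_def)
    then show "g \<in> value_set v (val_ge n)" unfolding value_set_def by (rule image_eqI[rotated])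
  qed
qed

lemma value_of_conductor_plus_x:
  assumes "g \<in> value_set v {a + x * s | a s. a \<in> val_ge c \<and> s \<in> R}"
  shows "c \<le> g \<or> g - e \<in> value_set v R"
proof -
  obtain u where u: "u \<in> {a + x * s | a s. a \<in> val_ge c \<and> s \<in> R}" "u \<noteq> 0" "g = v u"
    using assms unfolding value_set_def by blast
  then obtain a s where h: "u = a + x * s" "a \<in> val_ge c" "s \<in> R" by blast
  show ?thesis
  proof (cases "s = 0")
    case True then show ?thesis using h u by (simp add: val_ge_def)
  next
    case False
    have xs: "x * s \<noteq> 0" "v (x * s) = e + v s"
      using val_mult[OF x_nonzero False] val_x False x_nonzero by auto
    have "s \<in> R - {0}" using h False by simp
    then have vs: "v s \<in> value_set v R" unfolding value_set_def by blast
    consider "a = 0" | "a \<noteq> 0" "v a < v (x * s)" | "a \<noteq> 0" "v (x * s) < v a"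
      | "a \<noteq> 0" "v a = v (x * s)" by linarith
    then show ?thesis
    proof cases
      case 1 then show ?thesis using h u xs vs by simp
    next
      case 2 then show ?thesis using val_add_strict(2)[OF 2(1) xs(1) 2(2)] h u by (simp add: val_ge_def)
    next
      case 3
      then have "v u = v (x * s)" using val_add_strict(2)[OF xs(1) 3] h by (simp add: add.commute)
      then show ?thesis using u xs vs by simp
    next
      case 4
      then have "min (v a) (v (x * s)) \<le> v u" using val_add[OF 4(1) xs(1)] h u by simp
      then show ?thesis using 4 h u by (simp add: val_ge_def)
    qed
  qed
qed

text \<open>This is where k = 2 enters: a value s < c of R with s - e not a value of R is missing
  from the values of C + xR, and only two values are missing.\<close>

lemma value_without_predecessor:
  assumes s: "s \<in> value_set v R" "s < c" "s - e \<notin> value_set v R"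
  shows "s = 0 \<or> s = y"
proof (rule ccontr)
  assume "\<not> (s = 0 \<or> s = y)"
  let ?N = "{a + x * s | a s. a \<in> val_ge c \<and> s \<in> R}"
  have N: "rsubmod R ?N" using rsubmod_add_principal[OF rsubmod_val_ge x_in_R] .
  have NR: "?N \<subseteq> R" using conductor_subset x_in_R subring_add subring_mult by blast
  have CN: "val_ge c \<subseteq> ?N"
  proof
    fix a assume "a \<in> val_ge c"
    then have "a + x * 0 \<in> ?N" using subring_zero by blast
    then show "a \<in> ?N" by simp
  qed
  let ?gap = "value_set v R - value_set v ?N"
  have "card ?gap = 2"
    using rlength_eq_card_value_gap[OF N rsubmod_subring NR CN, where L = 0]
      length_two colon_int_closure val_nonneg by simp
  moreover have "finite ?gap" using finite_value_gap[OF CN, where L = 0] val_nonneg by blast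
  moreover have missing: "g \<in> ?gap" if "g \<in> value_set v R" "g < c" "g - e \<notin> value_set v R" for g
  proof -
    have "g \<notin> value_set v ?N"
    proof
      assume "g \<in> value_set v ?N"
      then have "c \<le> g \<or> g - e \<in> value_set v R" by (rule value_of_conductor_plus_x)
      then show False using that by auto
    qed
    then show ?thesis using that(1) by blast
  qed
  have "0 - e \<notin> value_set v R"
  proof
    assume "0 - e \<in> value_set v R"
    then have "0 \<le> 0 - e" by (rule value_set_nonneg)
    then show False using e_pos by simp
  qed
  then have "{0, y, s} \<subseteq> ?gap"
    using missing[OF value_set_zero c_pos] missing[OF y_props(1,3,4)] missing[OF s] by blast
  ultimately have "card {0, y, s} \<le> 2" using card_mono[of ?gap "{0, y, s}"] by simp
  then show False using \<open>\<not> (s = 0 \<or> s = y)\<close> y_props(2) by simp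
qed

definition small_values :: "int set" where
  "small_values = (\<lambda>i. i * e) ` {0..p} \<union> (\<lambda>i. y + i * e) ` {0..l}"

lemma small_value_if_below_conductor:
  "s \<in> value_set v R \<Longrightarrow> s < c \<Longrightarrow> s \<in> small_values"
proof (induction "nat s" arbitrary: s rule: less_induct)
  case less
  show ?case
  proof (cases "s - e \<in> value_set v R")
    case False
    then have "s = 0 \<or> s = y" using value_without_predecessor less.prems by blast
    moreover have "0 \<in> (\<lambda>i. i * e) ` {0..p}" using p_nonneg by (intro image_eqI[where x = 0]) auto
    moreover have "y \<in> (\<lambda>i. y + i * e) ` {0..l}" using l_bounds(1) by (intro image_eqI[where x = 0]) auto
    ultimately show ?thesis unfolding small_values_def by blast
  next
    case True
    have "0 \<le> s - e" using value_set_nonneg[OF True] .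
    then have "s - e \<in> small_values" using less.hyps[of "s - e"] True less.prems e_pos by simp
    then consider i where "i \<in> {0..p}" "s - e = i * e" | i where "i \<in> {0..l}" "s - e = y + i * e"
      unfolding small_values_def by blast
    then show ?thesis
    proof cases
      case 1
      have s: "s = (i + 1) * e" using 1 by (simp add: algebra_simps)
      have "c \<le> (p + 1) * e" using p_bounds by (simp add: algebra_simps)
      then have "(i + 1) * e < (p + 1) * e" using s less.prems(2) by linarith
      then have "i + 1 \<in> {0..p}" using 1 e_pos mult_less_cancel_right_pos[of e "i + 1" "p + 1"] by auto
      then show ?thesis using s unfolding small_values_def by blast
    next
      case 2
      have s: "s = y + (i + 1) * e" using 2 by (simp add: algebra_simps)
      then have "(i + 1) * e < (l + 1) * e" using less.prems(2) l_bounds(3) by linarith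
      then have "i + 1 \<in> {0..l}" using 2 e_pos mult_less_cancel_right_pos[of e "i + 1" "l + 1"] by auto
      then show ?thesis using s unfolding small_values_def by blast
    qed
  qed
qed

lemma small_values_below_conductor: "small_values \<subseteq> {s \<in> value_set v R. 0 \<le> s \<and> s < c}"
proof
  fix g assume "g \<in> small_values"
  then consider i where "i \<in> {0..p}" "g = i * e" | i where "i \<in> {0..l}" "g = y + i * e"
    unfolding small_values_def by blast
  then have "g \<in> value_set v R \<and> g < c"
  proof cases
    case 1
    have "i * e \<le> p * e" using 1 e_pos by (simp add: mult_right_mono)
    then have "g < c" using 1 p_bounds by linarith
    then show ?thesis using 1 mult_e_in_value_set[of i] by simp
  next
    case 2
    have "i * e \<le> l * e" using 2 e_pos by (simp add: mult_right_mono)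
    then have "g < c" using 2 l_bounds by linarith
    then show ?thesis using 2 value_set_add[OF y_props(1) mult_e_in_value_set[of i]] by simp
  qed
  then show "g \<in> {s \<in> value_set v R. 0 \<le> s \<and> s < c}" using value_set_nonneg by blast
qed

lemma values_below_conductor: "{s \<in> value_set v R. s < c} = small_values"
  using small_value_if_below_conductor small_values_below_conductor by blast

lemma card_small_values: "card small_values = nat (p + 1) + nat (l + 1)"
proof -
  have "inj_on (\<lambda>i. i * e) {0..p}" "inj_on (\<lambda>i. y + i * e) {0..l}"
    using e_pos by (auto simp: inj_on_def)
  moreover have "(\<lambda>i. i * e) ` {0..p} \<inter> (\<lambda>i. y + i * e) ` {0..l} = {}"
  proof (rule ccontr)
    assume "(\<lambda>i. i * e) ` {0..p} \<inter> (\<lambda>i. y + i * e) ` {0..l} \<noteq> {}"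
    then obtain i j where "i * e = y + j * e" by blast
    then have "y = (i - j) * e" by (simp add: algebra_simps)
    then show False using y_not_mult_e by blast
  qed
  ultimately show ?thesis unfolding small_values_def by (simp add: card_Un_disjoint card_image)
qed

lemma rlength_int_closure: "int (rlength R R (val_ge 0)) = c - p - l - 2"
proof -
  have "R \<subseteq> val_ge 0" using val_nonneg by (auto simp: val_ge_def)
  then have "rlength R R (val_ge 0) = card (value_set v (val_ge 0) - value_set v R)"
    by (rule rlength_eq_card_value_gap[OF rsubmod_subring rsubmod_val_ge _ conductor_subset, where L = 0])
      (simp add: val_ge_def)
  also have "value_set v (val_ge 0) - value_set v R = {0..<c} - small_values"
  proof -
    have "x < c" if "x \<notin> value_set v R" for x
      using that conductor_tail by (meson atLeast_iff not_le subsetD)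
    then have "{0..} - value_set v R = {0..<c} - {s \<in> value_set v R. s < c}" by auto
    then show ?thesis using value_set_val_ge[of 0] values_below_conductor by simp
  qed
  also have "card ({0..<c} - small_values) = card {0..<c} - card small_values"
    using small_values_below_conductor by (intro card_Diff_subset) (auto intro: finite_subset)
  finally have "rlength R R (val_ge 0) = nat c - (nat (p + 1) + nat (l + 1))"
    using card_small_values by simp
  moreover have "card small_values \<le> card {0..<c}"
    using small_values_below_conductor by (intro card_mono) auto
  ultimately show ?thesis using card_small_values p_nonneg l_bounds(1) by simp
qed

lemma val_ge_neg_e_if_in_colon:
  assumes "w \<in> colon R (max_ideal R)" "w \<noteq> 0"
  shows "- e \<le> v w"
proof -
  have "w * x \<in> R" "w * x \<noteq> 0" using assms x_max_ideal x_nonzero by (auto simp: colon_def)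
  then have "0 \<le> v (w * x)" using val_nonneg by simp
  then show ?thesis using val_mult[OF assms(2) x_nonzero] val_x by simp
qed

lemma conductor_minus_e_values_in_colon:
  assumes "c - e \<le> g"
  shows "g \<in> value_set v (colon R (max_ideal R))"
proof -
  have g: "0 \<le> g" using assms e_le_c by simp
  define z where "z = t ^ nat g"
  have z: "z \<noteq> 0" "v z = g" using val_uniformizer_power g by (auto simp: z_def)
  have "z * b \<in> R" if "b \<in> max_ideal R" for b
  proof (cases "b = 0")
    case False
    then have "c \<le> v (z * b)"
      using val_mult[OF z(1) False] e_le_val_if_in_max_ideal[OF that] z assms by simp
    then show ?thesis using conductor_subset by (auto simp: val_ge_def)
  qed (simp add: subring_zero)
  then have "z \<in> colon R (max_ideal R) - {0}" using z by (simp add: colon_def)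
  then show ?thesis unfolding value_set_def by (rule image_eqI[where f = v, OF z(2)[symmetric]])
qed

lemma conductor_minus_e_values_not_in_R:
  assumes "c - e \<le> g" "g < c" "g \<noteq> p * e" "g \<noteq> y + l * e"
  shows "g \<notin> value_set v R"
proof
  assume "g \<in> value_set v R"
  then have "g \<in> small_values" using values_below_conductor assms(2) by blast
  then consider i where "i \<in> {0..p}" "g = i * e" | i where "i \<in> {0..l}" "g = y + i * e"
    unfolding small_values_def by blast
  then show False
  proof cases
    case 1
    then have "i * e \<le> (p - 1) * e" using assms(3) e_pos by (intro mult_right_mono) auto
    then show False using 1 assms(1) p_bounds by (simp add: algebra_simps)
  next
    case 2
    then have "i * e \<le> (l - 1) * e" using assms(4) e_pos by (intro mult_right_mono) auto
    then show False using 2 assms(1) l_bounds by (simp add: algebra_simps)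
  qed
qed

text \<open>The hypothesis c \<le> 2y - e is what makes (w/x) w lie in R.\<close>

lemma realizing_monomial_div_x:
  assumes w: "w \<in> R" "w \<noteq> 0" "v w = y" and "c \<le> 2 * y - e"
    and "s \<in> small_values" "0 < s"
  shows "\<exists>n\<in>R. n \<noteq> 0 \<and> v n = s \<and> w / x * n \<in> R"
proof -
  have wx: "w * x ^ k \<in> R" for k using subring_mult subring_power x_in_R w(1) by simp
  have div_x_power: "w / x * x ^ k \<in> R" if "1 \<le> k" for k
  proof -
    have eq: "w / x * x ^ k = w * x ^ (k - 1)" using that x_nonzero by (cases k) auto
    show ?thesis unfolding eq by (rule wx)
  qed
  consider i where "i \<in> {0..p}" "s = i * e" | i where "i \<in> {0..l}" "s = y + i * e"
    using \<open>s \<in> small_values\<close> unfolding small_values_def by blast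
  then show ?thesis
  proof cases
    case 1
    then have "1 \<le> nat i" using \<open>0 < s\<close> e_pos by (simp add: zero_less_mult_iff)
    moreover have "v (x ^ nat i) = s" using 1 val_power[OF x_nonzero] val_x by simp
    moreover have "w / x * x ^ nat i \<in> R" using div_x_power[OF \<open>1 \<le> nat i\<close>] .
    moreover have "x ^ nat i \<noteq> 0" using x_nonzero by simp
    ultimately show ?thesis using subring_power[OF x_in_R] by (intro bexI[of _ "x ^ nat i"]) auto
  next
    case 2
    have "w / x * (w * x ^ nat i) \<in> R"
    proof (cases "i = 0")
      case True
      have "c \<le> v (w / x * w)"
        using val_mult[of "w / x" w] val_divide[OF w(2) x_nonzero] w x_nonzero val_x assms(4) by simp
      then have "w / x * w \<in> R" using conductor_subset by (auto simp: val_ge_def)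
      then show ?thesis using True by simp
    next
      case False
      then have "1 \<le> nat i" using 2 by auto
      have "w * (w / x * x ^ nat i) \<in> R" using subring_mult[OF w(1) div_x_power] \<open>1 \<le> nat i\<close> .
      then show ?thesis by (simp only: mult.left_commute)
    qed
    moreover have "v (w * x ^ nat i) = s"
      using 2 val_mult[of w "x ^ nat i"] val_power[OF x_nonzero] val_x w x_nonzero by simp
    moreover have "w * x ^ nat i \<noteq> 0" using w x_nonzero by simp
    ultimately show ?thesis using wx by (intro bexI[of _ "w * x ^ nat i"]) auto
  qed
qed

lemma y_minus_e_in_colon_values:
  assumes "c \<le> 2 * y - e"
  shows "y - e \<in> value_set v (colon R (max_ideal R))"
proof -
  obtain w where w: "w \<in> R" "w \<noteq> 0" "v w = y" using y_props(1) unfolding value_set_def by blast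
  define z where "z = w / x"
  have z: "z \<noteq> 0" "v z = y - e" using val_divide[of w x] w x_nonzero val_x by (auto simp: z_def)
  have z_high: "z * u \<in> R" if "u \<noteq> 0" "c \<le> v u" for u
  proof -
    have "c \<le> v (z * u)" using val_mult[OF z(1) that(1)] z(2) e_less_y that(2) by simp
    then show ?thesis using conductor_subset by (auto simp: val_ge_def)
  qed
  have realized: "\<exists>n\<in>max_ideal R. n \<noteq> 0 \<and> v n = v u \<and> z * n \<in> R"
    if u: "u \<in> max_ideal R" "u \<noteq> 0" for u
  proof (cases "c \<le> v u")
    case True then show ?thesis using u z_high by blast
  next
    case False
    have "0 < v u" using val_pos_if_in_max_ideal[OF u] .
    have "v u \<in> value_set v R" using u max_ideal_subset unfolding value_set_def by blast
    moreover have "v u < c" using False by simp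
    ultimately have "v u \<in> small_values" using values_below_conductor by blast
    then obtain n where "n \<in> R" "n \<noteq> 0" "v n = v u" "z * n \<in> R"
      using realizing_monomial_div_x[OF w assms _ \<open>0 < v u\<close>] unfolding z_def by blast
    then show ?thesis using in_max_ideal_if_val_pos \<open>0 < v u\<close> by auto
  qed
  have "z \<in> colon R (max_ideal R) - {0}"
    using mem_colon_by_value_approximation[OF rsubmod_max_ideal z_high realized] z(1) by blast
  then show ?thesis unfolding value_set_def by (rule image_eqI[where f = v, OF z(2)[symmetric]])
qed

lemma rlength_colon_max_ideal_ge:
  assumes "c \<le> 2 * y - e"
  shows "e - 1 \<le> int (rlength R R (colon R (max_ideal R)))"
proof -
  let ?M = "colon R (max_ideal R)"
  let ?gap = "value_set v ?M - value_set v R"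
  let ?top = "{c - e..<c} - {p * e, y + l * e}"
  have len: "rlength R R ?M = card ?gap"
    by (rule rlength_eq_card_value_gap[OF rsubmod_subring rsubmod_colon
          subring_subset_colon[OF max_ideal_subset] conductor_subset val_ge_neg_e_if_in_colon])
  have two: "{p * e, y + l * e} \<subseteq> {c - e..<c}" using p_bounds l_bounds by (auto simp: algebra_simps)
  have "p * e \<noteq> y + l * e" using y_not_mult_e[of "p - l"] by (auto simp: algebra_simps)
  then have card_top: "card ?top = nat e - 2" using card_Diff_subset[OF _ two] by simp
  have "?top \<subseteq> ?gap"
    using conductor_minus_e_values_in_colon conductor_minus_e_values_not_in_R by auto
  moreover have "y - e \<in> ?gap" using y_minus_e_in_colon_values[OF assms] y_props(4) by blast
  moreover have "finite ?gap"
    using finite_value_gap[OF conductor_subset val_ge_neg_e_if_in_colon] .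
  ultimately have "card (insert (y - e) ?top) \<le> card ?gap" by (intro card_mono) auto
  moreover have "card (insert (y - e) ?top) = nat e - 2 + 1" using card_top y_props(3) by simp
  moreover have "2 \<le> nat e" using card_mono[OF _ two] \<open>p * e \<noteq> y + l * e\<close> by simp
  ultimately show ?thesis using len by simp
qed

end

lemma h_bounds:
  fixes c e p h :: int
  assumes "h = (p + 1) * e - c" "c - e \<le> p * e" "p * e < c" "p * e \<noteq> c - 1"
  shows "0 \<le> h" "h \<le> e - 2"
  using assms by (simp_all add: algebra_simps)

lemma numerics_r_eq_e_minus_1:
  fixes c e \<delta> r b p h l :: int
  assumes \<delta>: "\<delta> = c - p - l - 2" and b: "b = (c - \<delta>) * r - \<delta>" and h: "h = (p + 1) * e - c"
    and "h \<le> e - 2" and r: "r = e - 1"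
  shows "b = (l + 1) * e + h \<and> b \<le> (l + 2) * e - 2 \<and> (b = (l + 2) * e - 2 \<longleftrightarrow> h = e - 2)"
proof -
  have "b = (p + l + 2) * (e - 1) - (c - p - l - 2)" unfolding b \<delta> r by simp
  then have "b = (l + 1) * e + ((p + 1) * e - c)" by (simp add: algebra_simps)
  then have "b = (l + 1) * e + h" using h by simp
  then show ?thesis using \<open>h \<le> e - 2\<close> by (simp add: algebra_simps)
qed

lemma numerics_r_eq_e_minus_2:
  fixes c e \<delta> r b p h y l :: int
  assumes \<delta>: "\<delta> = c - p - l - 2" and b: "b = (c - \<delta>) * r - \<delta>" and h: "h = (p + 1) * e - c"
    and h_bounds: "0 \<le> h" "h \<le> e - 2"
    and e_pos: "0 < e" and p: "c - e \<le> p * e" "p * e < c"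
    and y: "e < y" "2 * y - e < c" and l: "0 \<le> l" "y + l * e < c" "c \<le> y + (l + 1) * e"
    and r: "r = e - 2"
  shows "b = (l + 1) * (e - 1) + h - p - 1 \<and> c = (p + l + 2) * (e - 1) - b
          \<and> (l + 1 \<le> p \<and> p \<le> 2 * l + 2 \<and> (p = 2 * l + 2 \<longrightarrow> 0 < h))
          \<and> ((l + 1) * (e - 3) \<le> b \<and> b \<le> (l + 1) * (e - 2) + e - 3)
          \<and> (b = (l + 1) * (e - 3) \<longleftrightarrow> (p = 2 * l + 2 \<and> h = 1) \<or> (p = 2 * l + 1 \<and> h = 0))
          \<and> (b = (l + 1) * (e - 2) + e - 3 \<longrightarrow> p = l + 1 \<and> 1 < p \<and> h = e - 2 \<and> y = e + 1)"
proof -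
  have "b = (p + l + 2) * (e - 2) - (c - p - l - 2)" unfolding b \<delta> r by simp
  then have "b = (l + 1) * (e - 1) + ((p + 1) * e - c) - p - 1" by (simp add: algebra_simps)
  then have b1: "b = (l + 1) * (e - 1) + h - p - 1" using h by simp
  have b2: "c = (p + l + 2) * (e - 1) - b" unfolding b \<delta> r by (simp add: algebra_simps)
  have "(l + 1) * e < (p + 1) * e" using l(2) y(1) p(1) by (simp add: algebra_simps)
  then have lp: "l + 1 \<le> p" using e_pos by (simp add: mult_less_cancel_right_pos)
  have "p * e < (2 * l + 3) * e" using p(2) l(3) y(2) by (simp add: algebra_simps)
  then have p22: "p \<le> 2 * l + 2" using e_pos by (simp add: mult_less_cancel_right_pos)
  have ph: "p = 2 * l + 2 \<longrightarrow> 0 < h"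
  proof
    assume "p = 2 * l + 2"
    then have "h = 0 \<Longrightarrow> c = (2 * l + 3) * e" using h by (simp add: algebra_simps)
    then show "0 < h" using h_bounds(1) l(3) y(2) by (fastforce simp: algebra_simps)
  qed
  have bx: "b = l * e + e + h - l - p - 2" using b1 by (simp add: algebra_simps)
  have "p \<le> 2 * l + 1 + h" using p22 ph h_bounds(1) by (cases "p = 2 * l + 2") auto
  then have range: "(l + 1) * (e - 3) \<le> b \<and> b \<le> (l + 1) * (e - 2) + e - 3"
    using bx lp h_bounds by (simp add: algebra_simps)
  have low: "b = (l + 1) * (e - 3) \<longleftrightarrow> (p = 2 * l + 2 \<and> h = 1) \<or> (p = 2 * l + 1 \<and> h = 0)"
    using bx lp p22 ph h_bounds by (auto simp: algebra_simps)
  have high: "b = (l + 1) * (e - 2) + e - 3 \<longrightarrow> p = l + 1 \<and> 1 < p \<and> h = e - 2 \<and> y = e + 1"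
  proof
    assume "b = (l + 1) * (e - 2) + e - 3"
    then have hp: "h = e - 2" "p = l + 1" using bx lp h_bounds by (simp_all add: algebra_simps)
    then have c: "c = l * e + e + 2" using h by (simp add: algebra_simps)
    then have "y = e + 1" using l(2) y(1) by simp
    moreover have "1 < p" using hp c \<open>y = e + 1\<close> y(2) l(1) by (cases "l = 0") auto
    ultimately show "p = l + 1 \<and> 1 < p \<and> h = e - 2 \<and> y = e + 1" using hp by simp
  qed
  show ?thesis using b1 b2 lp p22 ph range low high by blast
qed

theorem lemma2p3:
  fixes R :: "'a::field set" and v :: "'a \<Rightarrow> int" and x :: 'a
    and c e \<delta> r b k p h y l :: int
  assumes subring: "is_subring R"
    and qf: "quotient_field_is_univ R"
    and noeth: "noetherian R"
    and loc: "local_ring R"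
    and dim1: "krull_dim_one R"
    and nonreg: "\<not> regular_dim_one R"
    and dvr: "normalized_dvr_valuation v (int_closure R)"
    and fin: "\<exists>F. finite F \<and> F \<subseteq> int_closure R \<and> int_closure R = rspan R F"
    and resrat: "\<forall>z\<in>int_closure R. \<exists>a\<in>R. z - a = 0 \<or> 0 < v (z - a)"
    and c_def: "c \<in> value_set v R \<and> {c..} \<subseteq> value_set v R \<and>
                (\<forall>c'. c' \<in> value_set v R \<and> {c'..} \<subseteq> value_set v R \<longrightarrow> c \<le> c')"
    and \<delta>_def: "\<delta> = int (rlength R R (int_closure R))"
    and r_def: "r = int (rlength R R (colon R (max_ideal R)))"
    and b_def: "b = (c - \<delta>) * r - \<delta>"
    and e_def: "e \<in> value_set v R \<and> 0 < e \<and> (\<forall>s\<in>value_set v R. 0 < s \<longrightarrow> e \<le> s)"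
    and x_def: "x \<in> max_ideal R \<and> x \<noteq> 0 \<and> v x = e"
    and k_def: "k = int (rlength R {a + x * s | a s. a \<in> colon R (int_closure R) \<and> s \<in> R} R)"
    and p_def: "c - e \<le> p * e \<and> p * e < c"
    and h_def: "h = (p + 1) * e - c"
    and k2: "k = 2"
    and y_def: "y \<in> value_set v R \<and> 0 < y \<and> y < c \<and> y - e \<notin> value_set v R"
    and l_def: "0 \<le> l \<and> y + l * e < c \<and> c \<le> y + (l + 1) * e"
  shows "(r = e - 1 \<longrightarrow>
            b = (l + 1) * e + h \<and> b \<le> (l + 2) * e - 2 \<and> (b = (l + 2) * e - 2 \<longleftrightarrow> h = e - 2))
       \<and> (r = e - 2 \<longrightarrow>
            b = (l + 1) * (e - 1) + h - p - 1 \<and> c = (p + l + 2) * (e - 1) - b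
          \<and> (l + 1 \<le> p \<and> p \<le> 2 * l + 2 \<and> (p = 2 * l + 2 \<longrightarrow> 0 < h))
          \<and> ((l + 1) * (e - 3) \<le> b \<and> b \<le> (l + 1) * (e - 2) + e - 3)
          \<and> (b = (l + 1) * (e - 3) \<longleftrightarrow> (p = 2 * l + 2 \<and> h = 1) \<or> (p = 2 * l + 1 \<and> h = 0))
          \<and> (b = (l + 1) * (e - 2) + e - 3 \<longrightarrow> p = l + 1 \<and> 1 < p \<and> h = e - 2 \<and> y = e + 1))"
proof -
  interpret valued_subring R v
    by (rule valued_subring_if_int_closure_dvr[OF subring dvr resrat])
  have closure: "int_closure R = val_ge 0"
    using dvr by (simp add: normalized_dvr_valuation_def val_ge_def)
  obtain t where t: "t \<noteq> 0" "v t = 1" using dvr unfolding normalized_dvr_valuation_def by blast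
  obtain F where "finite F" "val_ge 0 = rspan R F" using fin closure by auto
  then obtain d where "d \<in> R" "d \<noteq> 0" "\<And>z. z \<noteq> 0 \<Longrightarrow> 0 \<le> v z \<Longrightarrow> d * z \<in> R"
    using common_denominator[OF qf] by blast
  then have "val_ge c \<subseteq> R" using val_ge_subset_if_common_denominator c_def by blast
  then interpret k_two R v c e x y p l t
    using c_def e_def x_def loc nonreg t p_def y_def l_def k_def k2 closure by unfold_locales auto
  have \<delta>: "\<delta> = c - p - l - 2" using \<delta>_def rlength_int_closure closure by simp
  have "p * e \<noteq> c - 1"
    using conductor_pred_not_value mult_e_in_value_set[OF p_nonneg] by metis
  then have h: "0 \<le> h" "h \<le> e - 2" using h_bounds[OF h_def p_bounds] by auto
  have "r = e - 2 \<Longrightarrow> 2 * y - e < c"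
    using rlength_colon_max_ideal_ge r_def by fastforce
  then show ?thesis
    using numerics_r_eq_e_minus_1[OF \<delta> b_def h_def h(2)]
      numerics_r_eq_e_minus_2[OF \<delta> b_def h_def h e_pos p_bounds e_less_y _ l_bounds]
    by blast
qed

end
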